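(* Let $G$ be a simple, undirected, connected graph on $n$ vertices. Then the cat can localise the mouse up to distance $\sqrt{32n}$ by time $\sqrt{2n}$ on $G$; that is, there is a cat strategy such that for every admissible mouse sequence $(m_i)$ there is some $i\le\sqrt{2n}$ with $\mathrm{rad}_G(M_i)\le\sqrt{32n}$.
   Context: The Cat and Mouse game on a simple, undirected, connected graph $G$ with $n$ vertices proceeds in time steps $i=1,2,\dots$. The mouse occupies vertices $m_1,m_2,\dots$, where for $i\ge2$, $m_i$ equals $m_{i-1}$ or is a neighbour of $m_{i-1}$. At time $i$ the cat tests an arbitrary vertex $c_i$; for $i\ge2$ it is told $b_i=1$ if $d(c_i,m_i)\le d(c_{i-1},m_{i-1})$ and $b_i=0$ otherwise ($d$ = graph distance). A cat strategy is $(c_1,c_2,f)$ with $f:\bigcup_{i\in\mathbb N}\{0,1\}^i\to V(G)$ and $c_i=f(b_2,\dots,b_{i-1})$ for $i\ge3$ (deterministic, fixed in advance). $M_i$ is the set of vertices $v$ for which there exist $\tilde m_1,\dots,\tilde m_i$ with $\tilde m_i=v$, each $\tilde m_j$ in the closed neighbourhood of $\tilde m_{j-1}$, and for each $2\le j\le i$: $d(c_j,\tilde m_j)\le d(c_{j-1},\tilde m_{j-1})$ iff $b_j=1$. $\mathrm{rad}_G(W)=\min_{v\in V(G)}\max_{w\in W}d(v,w)$. The cat can localise the mouse up to distance $d$ within (by) time $t$ if there is a cat strategy such that, for every admissible mouse sequence, some $i\le t$ satisfies $\mathrm{rad}_G(M_i)\le d$. *)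

theory Defs
  imports Complex_Main
begin

text \<open>Graphs: vertex set V, adjacency relation E. Vertices of the mouse
 sequence and the cat's tests are indexed from time 1.\<close>

definition simple_graph :: "'a set \<Rightarrow> ('a \<Rightarrow> 'a \<Rightarrow> bool) \<Rightarrow> bool" where
  "simple_graph V E \<longleftrightarrow> (\<forall>u v. E u v \<longrightarrow> u \<in> V \<and> v \<in> V) \<and>
     (\<forall>u v. E u v \<longrightarrow> E v u) \<and> (\<forall>u. \<not> E u u)"

fun reach :: "('a \<Rightarrow> 'a \<Rightarrow> bool) \<Rightarrow> nat \<Rightarrow> 'a \<Rightarrow> 'a \<Rightarrow> bool" where
  "reach E 0 u v = (u = v)"
| "reach E (Suc k) u v = (\<exists>w. E u w \<and> reach E k w v)"

definition connected_graph :: "'a set \<Rightarrow> ('a \<Rightarrow> 'a \<Rightarrow> bool) \<Rightarrow> bool" where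
  "connected_graph V E \<longleftrightarrow> (\<forall>u\<in>V. \<forall>v\<in>V. \<exists>k. reach E k u v)"

definition gdist :: "('a \<Rightarrow> 'a \<Rightarrow> bool) \<Rightarrow> 'a \<Rightarrow> 'a \<Rightarrow> nat" where
  "gdist E u v = (LEAST k. reach E k u v)"

definition rad :: "'a set \<Rightarrow> ('a \<Rightarrow> 'a \<Rightarrow> bool) \<Rightarrow> 'a set \<Rightarrow> nat" where
  "rad V E W = Min ((\<lambda>v. Max ((\<lambda>w. gdist E v w) ` W)) ` V)"

definition mouse_seq :: "'a set \<Rightarrow> ('a \<Rightarrow> 'a \<Rightarrow> bool) \<Rightarrow> (nat \<Rightarrow> 'a) \<Rightarrow> bool" where
  "mouse_seq V E m \<longleftrightarrow> (\<forall>i\<ge>1. m i \<in> V) \<and>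
     (\<forall>i\<ge>2. m i = m (i - 1) \<or> E (m (i - 1)) (m i))"

text \<open>Position tested at time i, given the list of answers [b_2, ..., b_(i-1)].\<close>
definition catpos :: "'a \<Rightarrow> 'a \<Rightarrow> (bool list \<Rightarrow> 'a) \<Rightarrow> bool list \<Rightarrow> nat \<Rightarrow> 'a" where
  "catpos c1 c2 f bs i = (if i = 1 then c1 else if i = 2 then c2 else f bs)"

text \<open>hist k = [b_2, ..., b_k] (the answers received up to time k).\<close>
fun hist :: "('a \<Rightarrow> 'a \<Rightarrow> bool) \<Rightarrow> 'a \<Rightarrow> 'a \<Rightarrow> (bool list \<Rightarrow> 'a) \<Rightarrow> (nat \<Rightarrow> 'a) \<Rightarrow> nat \<Rightarrow> bool list" where
  "hist E c1 c2 f m 0 = []"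
| "hist E c1 c2 f m (Suc 0) = []"
| "hist E c1 c2 f m (Suc (Suc k)) =
     hist E c1 c2 f m (Suc k) @
     [gdist E (catpos c1 c2 f (hist E c1 c2 f m (Suc k)) (Suc (Suc k))) (m (Suc (Suc k)))
       \<le> gdist E (catpos c1 c2 f (hist E c1 c2 f m k) (Suc k)) (m (Suc k))]"

definition cat_c :: "('a \<Rightarrow> 'a \<Rightarrow> bool) \<Rightarrow> 'a \<Rightarrow> 'a \<Rightarrow> (bool list \<Rightarrow> 'a) \<Rightarrow> (nat \<Rightarrow> 'a) \<Rightarrow> nat \<Rightarrow> 'a" where
  "cat_c E c1 c2 f m i = catpos c1 c2 f (hist E c1 c2 f m (i - 1)) i"

definition cat_b :: "('a \<Rightarrow> 'a \<Rightarrow> bool) \<Rightarrow> 'a \<Rightarrow> 'a \<Rightarrow> (bool list \<Rightarrow> 'a) \<Rightarrow> (nat \<Rightarrow> 'a) \<Rightarrow> nat \<Rightarrow> bool" where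
  "cat_b E c1 c2 f m j =
     (gdist E (cat_c E c1 c2 f m j) (m j) \<le> gdist E (cat_c E c1 c2 f m (j - 1)) (m (j - 1)))"

definition Mset :: "'a set \<Rightarrow> ('a \<Rightarrow> 'a \<Rightarrow> bool) \<Rightarrow> 'a \<Rightarrow> 'a \<Rightarrow> (bool list \<Rightarrow> 'a) \<Rightarrow> (nat \<Rightarrow> 'a) \<Rightarrow> nat \<Rightarrow> 'a set" where
  "Mset V E c1 c2 f m i = {v. \<exists>mt :: nat \<Rightarrow> 'a. mt i = v \<and>
      (\<forall>j\<in>{1..i}. mt j \<in> V) \<and>
      (\<forall>j\<in>{2..i}. mt j = mt (j - 1) \<or> E (mt (j - 1)) (mt j)) \<and>
      (\<forall>j\<in>{2..i}. (gdist E (cat_c E c1 c2 f m j) (mt j)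
                     \<le> gdist E (cat_c E c1 c2 f m (j - 1)) (mt (j - 1))) = cat_b E c1 c2 f m j)}"

end

theory Submission
  imports Defs
begin

(* Let r = floor (sqrt (2n)) and let N be a maximal set of vertices with pairwise distances
   greater than 2r, so every vertex is within 2r of N. If |N| >= 2, the balls of radius r
   around the points of N are disjoint and each contains at least r + 1 vertices (those on a
   shortest path to another point of N), hence |N| (r + 1) <= n and 2|N| - 1 <= r.

   The cat runs a knockout tournament among the points of N. It keeps a champion p whose
   distance to the mouse it has just tested and then tests the next challenger q; the answer
   says whether q is now at least as close to the mouse as p was one step earlier, and the
   winner becomes the champion (a losing challenger costs one extra step to retest p). If
   x in N was within 2r of the mouse at time 1, then x is within 2r + j - 1 of it at time j,
   and from the moment x has played, the champion is within that distance as well. After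
   2|N| - 1 <= r steps every point has played, so all possible mouse positions lie within
   3r <= sqrt (32n) of the champion. *)

section \<open>Walks and graph distance\<close>

lemma reach_trans: "reach E a u v \<Longrightarrow> reach E b v w \<Longrightarrow> reach E (a + b) u w"
  by (induction a arbitrary: u) auto

lemma reach_Suc_right: "reach E (Suc k) u v \<longleftrightarrow> (\<exists>w. reach E k u w \<and> E w v)"
  by (induction k arbitrary: u) auto

lemma reach_split:
  "reach E k u v \<Longrightarrow> s \<le> k \<Longrightarrow> \<exists>z. reach E s u z \<and> reach E (k - s) z v"
proof (induction s arbitrary: u k)
  case (Suc s)
  then obtain k' w where "k = Suc k'" "E u w" "reach E k' w v" "s \<le> k'"
    by (cases k) auto
  with Suc.IH show ?case by fastforce
qed auto

lemma reach_in_vertices: "simple_graph V E \<Longrightarrow> u \<in> V \<Longrightarrow> reach E k u v \<Longrightarrow> v \<in> V"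
  by (induction k arbitrary: u) (auto simp: simple_graph_def)

lemma reach_sym: "simple_graph V E \<Longrightarrow> reach E k u v \<Longrightarrow> reach E k v u"
proof (induction k arbitrary: u)
  case (Suc k)
  then obtain w where "E u w" "reach E k w v"
    by auto
  with Suc have "E w u" "reach E k v w"
    by (auto simp: simple_graph_def)
  then show ?case
    unfolding reach_Suc_right by blast
qed simp

lemma gdist_le: "reach E k u v \<Longrightarrow> gdist E u v \<le> k"
  unfolding gdist_def by (rule Least_le)

lemma gdist_self [simp]: "gdist E u u = 0"
  using gdist_le[of E 0 u u] by simp

locale connected_simple_graph =
  fixes V :: "'a set" and E :: "'a \<Rightarrow> 'a \<Rightarrow> bool"
  assumes simple: "simple_graph V E" and connected: "connected_graph V E"
begin

lemma reach_gdist: "u \<in> V \<Longrightarrow> v \<in> V \<Longrightarrow> reach E (gdist E u v) u v"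
  using connected unfolding connected_graph_def gdist_def by (metis LeastI)

lemma gdist_triangle:
  assumes "u \<in> V" "v \<in> V" "w \<in> V"
  shows "gdist E u w \<le> gdist E u v + gdist E v w"
  using gdist_le[OF reach_trans[OF reach_gdist[OF assms(1,2)] reach_gdist[OF assms(2,3)]]] .

lemma gdist_commute: "u \<in> V \<Longrightarrow> v \<in> V \<Longrightarrow> gdist E u v = gdist E v u"
  by (metis antisym gdist_le reach_gdist reach_sym simple)

lemma gdist_step:
  assumes "u \<in> V" "v \<in> V" "w = v \<or> E v w"
  shows "gdist E u w \<le> gdist E u v + 1"
  using assms(3)
proof
  assume "E v w"
  then have "reach E 1 v w" by simp
  then show ?thesis
    using gdist_le[OF reach_trans[OF reach_gdist[OF assms(1,2)]]] by blast
qed simp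

lemma exists_vertex_at_gdist:
  assumes p: "p \<in> V" and y: "y \<in> V" and s: "s \<le> gdist E p y"
  shows "\<exists>z\<in>V. gdist E p z = s"
proof -
  obtain z where pz: "reach E s p z" and zy: "reach E (gdist E p y - s) z y"
    using reach_split[OF reach_gdist[OF p y] s] by blast
  have z: "z \<in> V"
    using reach_in_vertices[OF simple p pz] .
  have "gdist E p y \<le> gdist E p z + gdist E z y"
    using gdist_triangle[OF p z y] .
  with gdist_le[OF pz] gdist_le[OF zy] s have "gdist E p z = s"
    by linarith
  with z show ?thesis by blast
qed

lemma card_ball_ge:
  assumes "finite V" "p \<in> V" "y \<in> V" "r \<le> gdist E p y"
  shows "r + 1 \<le> card {z\<in>V. gdist E p z \<le> r}"
proof -
  have "{0..r} \<subseteq> gdist E p ` {z\<in>V. gdist E p z \<le> r}"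
  proof
    fix s assume s: "s \<in> {0..r}"
    then obtain z where "z \<in> V" "gdist E p z = s"
      using exists_vertex_at_gdist[OF assms(2,3), of s] assms(4) by auto
    with s show "s \<in> gdist E p ` {z\<in>V. gdist E p z \<le> r}"
      by force
  qed
  then have "card {0..r} \<le> card (gdist E p ` {z\<in>V. gdist E p z \<le> r})"
    using assms(1) by (intro card_mono) auto
  also have "\<dots> \<le> card {z\<in>V. gdist E p z \<le> r}"
    using assms(1) by (intro card_image_le) auto
  finally show ?thesis by simp
qed

section \<open>Separated sets\<close>

lemma exists_separated_cover:
  assumes fin: "finite V" and ne: "V \<noteq> {}"
  obtains N where "N \<subseteq> V" "N \<noteq> {}" "\<forall>v\<in>V. \<exists>x\<in>N. gdist E x v \<le> \<rho>"
    "\<forall>x\<in>N. \<forall>y\<in>N. x \<noteq> y \<longrightarrow> \<rho> < gdist E x y"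
proof -
  define F where "F = {N. N \<subseteq> V \<and> (\<forall>x\<in>N. \<forall>y\<in>N. x \<noteq> y \<longrightarrow> \<rho> < gdist E x y)}"
  obtain v0 where "v0 \<in> V" using ne by blast
  then have "{v0} \<in> F" unfolding F_def by simp
  moreover have "finite F"
    using fin unfolding F_def by (auto intro: finite_subset[of _ "Pow V"])
  ultimately obtain N where N: "N \<in> F" and max: "\<forall>N'\<in>F. N \<subseteq> N' \<longrightarrow> N = N'"
    using finite_has_maximal by blast
  have NV: "N \<subseteq> V" and sep: "\<forall>x\<in>N. \<forall>y\<in>N. x \<noteq> y \<longrightarrow> \<rho> < gdist E x y"
    using N unfolding F_def by auto
  have cover: "\<exists>x\<in>N. gdist E x v \<le> \<rho>" if v: "v \<in> V" for v
  proof (rule ccontr)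
    assume "\<not> (\<exists>x\<in>N. gdist E x v \<le> \<rho>)"
    then have far: "\<rho> < gdist E x v" "\<rho> < gdist E v x" if "x \<in> N" for x
      using that gdist_commute[OF subsetD[OF NV that] v] by (auto simp: not_le)
    then have "insert v N \<in> F"
      using NV sep v unfolding F_def by auto
    with max have "v \<in> N" by blast
    with far show False by fastforce
  qed
  have "N \<noteq> {}"
    using ne cover by blast
  with NV cover sep show ?thesis
    using that by blast
qed

lemma card_separated_set:
  assumes fin: "finite V" and "N \<subseteq> V"
    and sep: "\<forall>x\<in>N. \<forall>y\<in>N. x \<noteq> y \<longrightarrow> 2 * r < gdist E x y"
    and "2 \<le> card N"
  shows "card N * (r + 1) \<le> card V"
proof -
  define B where "B x = {z\<in>V. gdist E x z \<le> r}" for x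
  have finN: "finite N"
    using assms(2) fin by (rule finite_subset)
  have disjoint: "B x \<inter> B y = {}" if "x \<in> N" "y \<in> N" "x \<noteq> y" for x y
  proof -
    have "gdist E x y \<le> 2 * r" if "z \<in> B x" "z \<in> B y" for z
      using that \<open>x \<in> N\<close> \<open>y \<in> N\<close> \<open>N \<subseteq> V\<close> gdist_triangle[of x z y] gdist_commute[of z y]
      unfolding B_def by fastforce
    with sep that show ?thesis by fastforce
  qed
  have big: "r + 1 \<le> card (B x)" if "x \<in> N" for x
  proof -
    obtain y where "y \<in> N" "y \<noteq> x"
      using \<open>2 \<le> card N\<close> \<open>x \<in> N\<close>
      by (metis card_le_Suc0_iff_eq finN not_less_eq_eq numeral_2_eq_2)
    with sep that \<open>N \<subseteq> V\<close> have "x \<in> V" "y \<in> V" "r \<le> gdist E x y"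
      by fastforce+
    then show ?thesis
      unfolding B_def by (rule card_ball_ge[OF fin])
  qed
  have "card N * (r + 1) \<le> (\<Sum>x\<in>N. card (B x))"
    using sum_mono[OF big] by simp
  also have "\<dots> = card (\<Union>x\<in>N. B x)"
    using disjoint fin finN by (intro card_UN_disjoint[symmetric]) (auto simp: B_def)
  also have "\<dots> \<le> card V"
    using fin by (intro card_mono) (auto simp: B_def)
  finally show ?thesis .
qed

lemma double_card_separated_set_le:
  assumes "finite V" "N \<subseteq> V"
    and "\<forall>x\<in>N. \<forall>y\<in>N. x \<noteq> y \<longrightarrow> 2 * r < gdist E x y"
    and "2 * card V < (r + 1)\<^sup>2" "1 \<le> r"
  shows "2 * card N - 1 \<le> r"
proof (cases "2 \<le> card N")
  case True
  then have "2 * card N * (r + 1) < (r + 1) * (r + 1)"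
    using card_separated_set[OF assms(1-3)] assms(4) by (simp add: power2_eq_square)
  then have "2 * card N < r + 1"
    by (metis mult_less_cancel2)
  then show ?thesis by simp
qed (use assms(5) in auto)

end

lemma length_hist: "length (hist E c1 c2 f m (Suc k)) = k"
  by (induction k) auto

lemma hist_Suc:
  "1 \<le> j \<Longrightarrow> hist E c1 c2 f m (Suc j) = hist E c1 c2 f m j @ [cat_b E c1 c2 f m (Suc j)]"
  by (cases j) (auto simp: cat_b_def cat_c_def)

lemma cat_c_Suc: "1 \<le> j \<Longrightarrow> cat_c E c1 (f []) f m (Suc j) = f (hist E c1 (f []) f m j)"
  by (cases "j = 1") (auto simp: cat_c_def catpos_def)

lemma Mset_subset: "1 \<le> i \<Longrightarrow> Mset V E c1 c2 f m i \<subseteq> V"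
  unfolding Mset_def by auto

lemma mouse_in_Mset: "mouse_seq V E m \<Longrightarrow> m i \<in> Mset V E c1 c2 f m i"
  unfolding Mset_def mouse_seq_def cat_b_def by (auto intro!: exI[of _ m])

lemma rad_le:
  assumes "finite V" "p \<in> V" "finite W" "W \<noteq> {}" "\<And>w. w \<in> W \<Longrightarrow> gdist E p w \<le> R"
  shows "rad V E W \<le> R"
proof -
  have "rad V E W \<le> Max (gdist E p ` W)"
    unfolding rad_def using assms(1,2) by (intro Min_le) auto
  also have "\<dots> \<le> R"
    using assms(3-5) by simp
  finally show ?thesis .
qed

section \<open>The tournament strategy\<close>

(* champ_tested: the last vertex tested was the champion, so the next answer compares the next
   challenger with it; otherwise the last test was a challenger that lost, and the champion is
   tested again. *)
datatype 'a tourney = Tourney (champ: 'a) (champ_tested: bool) (challengers: "'a list")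

fun tourney_step :: "'a tourney \<Rightarrow> bool \<Rightarrow> 'a tourney" where
  "tourney_step (Tourney p True (q # qs)) b = (if b then Tourney q True qs else Tourney p False qs)"
| "tourney_step (Tourney p t qs) b = Tourney p True qs"

fun tourney_query :: "'a tourney \<Rightarrow> 'a" where
  "tourney_query (Tourney p True (q # qs)) = q"
| "tourney_query (Tourney p t qs) = p"

definition tourney_strategy :: "'a tourney \<Rightarrow> bool list \<Rightarrow> 'a" where
  "tourney_strategy s0 bs = tourney_query (foldl tourney_step s0 bs)"

definition tourney_vertices :: "'a tourney \<Rightarrow> 'a set" where
  "tourney_vertices s = insert (champ s) (set (challengers s))"

lemma tourney_vertices_foldl: "tourney_vertices (foldl tourney_step s bs) \<subseteq> tourney_vertices s"
proof (induction bs arbitrary: s)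
  case (Cons b bs)
  have "tourney_vertices (tourney_step s b) \<subseteq> tourney_vertices s"
    by (cases "(s, b)" rule: tourney_step.cases) (auto simp: tourney_vertices_def)
  with Cons.IH show ?case by fastforce
qed simp

lemma champ_foldl_in_vertices: "champ (foldl tourney_step s bs) \<in> tourney_vertices s"
  by (rule subsetD[OF tourney_vertices_foldl[of s bs]]) (simp add: tourney_vertices_def)

lemma tourney_strategy_in_vertices: "tourney_strategy s bs \<in> tourney_vertices s"
proof -
  have "tourney_query s' \<in> tourney_vertices s'" for s' :: "'a tourney"
    by (cases s' rule: tourney_query.cases) (auto simp: tourney_vertices_def)
  then show ?thesis
    unfolding tourney_strategy_def by (rule subsetD[OF tourney_vertices_foldl])
qed

definition tourney_potential :: "'a tourney \<Rightarrow> nat" where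
  "tourney_potential s = 2 * length (challengers s) + (if champ_tested s then 0 else 1)"

lemma tourney_potential_foldl:
  "tourney_potential (foldl tourney_step s bs) \<le> tourney_potential s - length bs"
proof (induction bs arbitrary: s)
  case (Cons b bs)
  have "tourney_potential (tourney_step s b) \<le> tourney_potential s - 1"
    by (cases "(s, b)" rule: tourney_step.cases) (auto simp: tourney_potential_def)
  with Cons.IH[of "tourney_step s b"] show ?case by simp
qed simp

lemma challengers_foldl_Nil:
  "champ_tested s \<Longrightarrow> 2 * length (challengers s) \<le> length bs \<Longrightarrow>
    challengers (foldl tourney_step s bs) = []"
  using tourney_potential_foldl[of s bs] by (simp add: tourney_potential_def)

(* c is the vertex tested last and u the mouse position at that time; x is a candidate that
   started close to the mouse. *)
definition tourney_inv :: "('a \<Rightarrow> 'b \<Rightarrow> nat) \<Rightarrow> 'a \<Rightarrow> 'a \<Rightarrow> 'b \<Rightarrow> nat \<Rightarrow> 'a tourney \<Rightarrow> bool" where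
  "tourney_inv d x c u R s \<longleftrightarrow>
    (champ_tested s \<longrightarrow> c = champ s) \<and> (x \<in> set (challengers s) \<or> d (champ s) u \<le> R)"

(* A losing challenger q certifies d p u < d q u', so if q = x the champion p was close too. *)
lemma tourney_inv_step:
  assumes "tourney_inv d x c u R s"
    and "d (champ s) u' \<le> d (champ s) u + 1"
    and "d x u' \<le> R + 1"
  shows "tourney_inv d x (tourney_query s) u' (R + 1)
    (tourney_step s (d (tourney_query s) u' \<le> d c u))"
  using assms
  by (cases "(s, d (tourney_query s) u' \<le> d c u)" rule: tourney_step.cases)
    (auto simp: tourney_inv_def)

context connected_simple_graph
begin

lemma gdist_walk:
  assumes "x \<in> V" "\<forall>j\<in>{1..i}. mt j \<in> V" "\<forall>j\<in>{2..i}. mt j = mt (j - 1) \<or> E (mt (j - 1)) (mt j)"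
    and "1 \<le> j" "j \<le> i"
  shows "gdist E x (mt j) \<le> gdist E x (mt 1) + (j - 1)"
  using assms(4,5)
proof (induction j rule: dec_induct)
  case (step k)
  then have "mt (Suc k) = mt k \<or> E (mt k) (mt (Suc k))"
    using bspec[OF assms(3), of "Suc k"] by simp
  then have "gdist E x (mt (Suc k)) \<le> gdist E x (mt k) + 1"
    using assms(1,2) step by (intro gdist_step) auto
  with step show ?case by simp
qed simp

lemma tourney_strategy_inv:
  fixes s0 :: "'a tourney"
  defines "f \<equiv> tourney_strategy s0"
  assumes s0: "champ_tested s0" "tourney_vertices s0 \<subseteq> V" and x: "x \<in> tourney_vertices s0"
    and walk: "\<forall>j\<in>{1..i}. mt j \<in> V" "\<forall>j\<in>{2..i}. mt j = mt (j - 1) \<or> E (mt (j - 1)) (mt j)"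
    and consistent: "\<forall>j\<in>{2..i}.
      (gdist E (cat_c E (champ s0) (f []) f m j) (mt j)
        \<le> gdist E (cat_c E (champ s0) (f []) f m (j - 1)) (mt (j - 1)))
      = cat_b E (champ s0) (f []) f m j"
    and x_close: "gdist E x (mt 1) \<le> \<rho>"
    and "1 \<le> j" and ji: "j \<le> i"
  shows "tourney_inv (gdist E) x (cat_c E (champ s0) (f []) f m j) (mt j) (\<rho> + j - 1)
    (foldl tourney_step s0 (hist E (champ s0) (f []) f m j))"
  using \<open>1 \<le> j\<close>
proof (induction j rule: dec_induct)
  case base
  show ?case
    using s0(1) x x_close by (auto simp: tourney_inv_def tourney_vertices_def cat_c_def catpos_def)
next
  case (step k)
  define s where "s = foldl tourney_step s0 (hist E (champ s0) (f []) f m k)"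
  have query: "cat_c E (champ s0) (f []) f m (Suc k) = tourney_query s"
    using cat_c_Suc[OF step.hyps(1), of E "champ s0" f m] unfolding s_def
    by (simp add: f_def tourney_strategy_def)
  have "Suc k \<in> {2..i}"
    using step.hyps ji by simp
  from bspec[OF consistent this]
  have answer: "(gdist E (tourney_query s) (mt (Suc k))
      \<le> gdist E (cat_c E (champ s0) (f []) f m k) (mt k)) = cat_b E (champ s0) (f []) f m (Suc k)"
    unfolding query diff_Suc_1 .
  have "champ s \<in> V"
    using champ_foldl_in_vertices s0(2) unfolding s_def by blast
  moreover have "mt k \<in> V" "mt (Suc k) = mt k \<or> E (mt k) (mt (Suc k))"
    using bspec[OF walk(1), of k] bspec[OF walk(2), of "Suc k"] step.hyps ji by simp_all
  ultimately have "gdist E (champ s) (mt (Suc k)) \<le> gdist E (champ s) (mt k) + 1"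
    by (rule gdist_step)
  moreover have "gdist E x (mt (Suc k)) \<le> \<rho> + k"
    using gdist_walk[OF subsetD[OF s0(2) x] walk, of "Suc k"] x_close step.hyps ji by simp
  ultimately show ?case
    using tourney_inv_step[OF step.IH[folded s_def], of "mt (Suc k)"] step.hyps(1)
    by (simp add: hist_Suc s_def[symmetric] query answer[symmetric])
qed

lemma tourney_localises:
  fixes s0 :: "'a tourney"
  defines "f \<equiv> tourney_strategy s0" and "T \<equiv> 2 * length (challengers s0) + 1"
  assumes fin: "finite V" and s0: "champ_tested s0" "tourney_vertices s0 \<subseteq> V"
    and cover: "\<forall>v\<in>V. \<exists>x\<in>tourney_vertices s0. gdist E x v \<le> \<rho>"
    and mouse: "mouse_seq V E m"
  shows "rad V E (Mset V E (champ s0) (f []) f m T) \<le> \<rho> + T - 1"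
proof -
  define s where "s = foldl tourney_step s0 (hist E (champ s0) (f []) f m T)"
  have no_challengers: "challengers s = []"
    unfolding s_def T_def using challengers_foldl_Nil[OF s0(1)] by (simp add: length_hist)
  have "champ s \<in> V"
    using champ_foldl_in_vertices s0(2) unfolding s_def by blast
  moreover have "gdist E (champ s) v \<le> \<rho> + T - 1" if v: "v \<in> Mset V E (champ s0) (f []) f m T" for v
  proof -
    obtain mt where "mt T = v" and walk: "\<forall>j\<in>{1..T}. mt j \<in> V"
      "\<forall>j\<in>{2..T}. mt j = mt (j - 1) \<or> E (mt (j - 1)) (mt j)"
      and consistent: "\<forall>j\<in>{2..T}.
        (gdist E (cat_c E (champ s0) (f []) f m j) (mt j)
          \<le> gdist E (cat_c E (champ s0) (f []) f m (j - 1)) (mt (j - 1)))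
        = cat_b E (champ s0) (f []) f m j"
      using v unfolding Mset_def by blast
    have "mt 1 \<in> V"
      using walk(1) by (simp add: T_def)
    then obtain x where x: "x \<in> tourney_vertices s0" "gdist E x (mt 1) \<le> \<rho>"
      using cover by blast
    have "tourney_inv (gdist E) x (cat_c E (champ s0) (f []) f m T) (mt T) (\<rho> + T - 1) s"
      using tourney_strategy_inv[OF s0 x(1) walk consistent[unfolded f_def] x(2) _ order_refl]
      unfolding s_def f_def T_def by simp
    with no_challengers \<open>mt T = v\<close> show ?thesis
      by (simp add: tourney_inv_def)
  qed
  moreover have "Mset V E (champ s0) (f []) f m T \<subseteq> V"
    by (rule Mset_subset) (simp add: T_def)
  ultimately show ?thesis
    using fin mouse_in_Mset[OF mouse, of T "champ s0" "f []" f]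
    by (intro rad_le) (auto intro: finite_subset)
qed

lemma cat_localises_by_cover:
  assumes "finite V" "qs \<noteq> []" "set qs \<subseteq> V" and cover: "\<forall>v\<in>V. \<exists>x\<in>set qs. gdist E x v \<le> \<rho>"
  shows "\<exists>c1 c2 f. c1 \<in> V \<and> c2 \<in> V \<and> (\<forall>bs. f bs \<in> V) \<and>
    (\<forall>m. mouse_seq V E m \<longrightarrow>
      rad V E (Mset V E c1 c2 f m (2 * length qs - 1)) \<le> \<rho> + 2 * length qs - 2)"
proof -
  define s0 where "s0 = Tourney (hd qs) True (tl qs)"
  have vertices: "tourney_vertices s0 = set qs"
    using \<open>qs \<noteq> []\<close> unfolding s0_def tourney_vertices_def by (cases qs) auto
  have T: "2 * length (challengers s0) + 1 = 2 * length qs - 1"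
    using \<open>qs \<noteq> []\<close> unfolding s0_def by (cases qs) auto
  have "tourney_strategy s0 bs \<in> V" for bs
    using tourney_strategy_in_vertices vertices assms(3) by blast
  moreover have "champ s0 \<in> V"
    using vertices assms(3) unfolding tourney_vertices_def by blast
  moreover have "rad V E (Mset V E (champ s0) (tourney_strategy s0 []) (tourney_strategy s0) m
      (2 * length qs - 1)) \<le> \<rho> + 2 * length qs - 2" if "mouse_seq V E m" for m
  proof -
    have "champ_tested s0"
      by (simp add: s0_def)
    then have "rad V E (Mset V E (champ s0) (tourney_strategy s0 []) (tourney_strategy s0) m
        (2 * length qs - 1)) \<le> \<rho> + (2 * length qs - 1) - 1"
      using tourney_localises[OF assms(1) _ _ _ that, of s0 \<rho>] vertices assms(3,4)
      unfolding T by simp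
    also have "\<rho> + (2 * length qs - 1) - 1 = \<rho> + 2 * length qs - 2"
      using \<open>qs \<noteq> []\<close> by (cases qs) auto
    finally show ?thesis .
  qed
  ultimately show ?thesis
    by blast
qed

lemma cat_localises_by_separated_cover:
  assumes "finite V" "V \<noteq> {}" "2 * card V < (r + 1)\<^sup>2" "1 \<le> r"
  obtains c1 c2 f T where "c1 \<in> V" "c2 \<in> V" "\<forall>bs. f bs \<in> V" "1 \<le> T" "T \<le> r"
    "\<And>m. mouse_seq V E m \<Longrightarrow> rad V E (Mset V E c1 c2 f m T) \<le> 3 * r"
proof -
  obtain N where N: "N \<subseteq> V" "N \<noteq> {}" and cover: "\<forall>v\<in>V. \<exists>x\<in>N. gdist E x v \<le> 2 * r"
    and sep: "\<forall>x\<in>N. \<forall>y\<in>N. x \<noteq> y \<longrightarrow> 2 * r < gdist E x y"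
    using exists_separated_cover[OF assms(1,2)] by blast
  obtain qs where qs: "distinct qs" "set qs = N"
    using finite_distinct_list[OF finite_subset[OF N(1) assms(1)]] by blast
  have "qs \<noteq> []"
    using N(2) qs(2) by auto
  define T where "T = 2 * length qs - 1"
  have "1 \<le> T"
    using \<open>qs \<noteq> []\<close> unfolding T_def by (cases qs) auto
  have "card N = length qs"
    using qs distinct_card by metis
  then have "T \<le> r"
    using double_card_separated_set_le[OF assms(1) N(1) sep assms(3,4)] unfolding T_def by simp
  obtain c1 c2 f where "c1 \<in> V" "c2 \<in> V" "\<forall>bs. f bs \<in> V"
    and localised: "\<And>m. mouse_seq V E m \<Longrightarrow>
      rad V E (Mset V E c1 c2 f m T) \<le> 2 * r + 2 * length qs - 2"
    using cat_localises_by_cover[OF assms(1) \<open>qs \<noteq> []\<close> N(1)[folded qs(2)] cover[folded qs(2)]]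
    unfolding T_def by blast
  have "rad V E (Mset V E c1 c2 f m T) \<le> 3 * r" if "mouse_seq V E m" for m
    using localised[OF that] \<open>T \<le> r\<close> unfolding T_def by linarith
  with \<open>c1 \<in> V\<close> \<open>c2 \<in> V\<close> \<open>\<forall>bs. f bs \<in> V\<close> \<open>1 \<le> T\<close> \<open>T \<le> r\<close> show ?thesis
    by (rule that)
qed

end

lemma floor_sqrt_bounds:
  fixes n :: nat
  assumes "1 \<le> n"
  defines "r \<equiv> nat \<lfloor>sqrt (2 * real n)\<rfloor>"
  shows "1 \<le> r" and "real r \<le> sqrt (2 * real n)" and "2 * n < (r + 1)\<^sup>2"
    and "3 * real r \<le> sqrt (32 * real n)"
proof -
  have "1 \<le> sqrt (2 * real n)"
    using assms(1) by (intro real_le_rsqrt) simp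
  then show "1 \<le> r" and r_le: "real r \<le> sqrt (2 * real n)"
    unfolding r_def by linarith+
  have "sqrt (2 * real n) < real r + 1"
    unfolding r_def by linarith
  then have "sqrt (2 * real n) ^ 2 < (real r + 1) ^ 2"
    by (intro power_strict_mono) auto
  then have "real (2 * n) < real ((r + 1)\<^sup>2)"
    by (simp add: add.commute)
  then show "2 * n < (r + 1)\<^sup>2"
    by (rule of_nat_less_imp_less)
  have "sqrt (32 * real n) = sqrt (4\<^sup>2 * (2 * real n))"
    by simp
  also have "\<dots> = 4 * sqrt (2 * real n)"
    unfolding real_sqrt_mult by simp
  finally show "3 * real r \<le> sqrt (32 * real n)"
    using r_le by simp
qed

theorem theorem1p3:
  fixes V :: "'a set" and E :: "'a \<Rightarrow> 'a \<Rightarrow> bool" and n :: nat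
  assumes "finite V" and "V \<noteq> {}" and "card V = n"
    and "simple_graph V E" and "connected_graph V E"
  shows "\<exists>c1 c2 (f :: bool list \<Rightarrow> 'a). c1 \<in> V \<and> c2 \<in> V \<and> (\<forall>bs. bs \<noteq> [] \<longrightarrow> f bs \<in> V) \<and>
    (\<forall>m. mouse_seq V E m \<longrightarrow>
       (\<exists>i. 1 \<le> i \<and> real i \<le> sqrt (2 * real n) \<and>
            real (rad V E (Mset V E c1 c2 f m i)) \<le> sqrt (32 * real n)))"
proof -
  interpret connected_simple_graph V E
    using assms(4,5) by unfold_locales
  define r where "r = nat \<lfloor>sqrt (2 * real n)\<rfloor>"
  have "0 < card V"
    using assms(1,2) by (simp add: card_gt_0_iff)
  then have "1 \<le> n"
    using assms(3) by simp
  note r = floor_sqrt_bounds[OF this, folded r_def]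
  obtain c1 c2 f T where "c1 \<in> V" "c2 \<in> V" "\<forall>bs. f bs \<in> V" "1 \<le> T" "T \<le> r"
    and localised: "\<And>m. mouse_seq V E m \<Longrightarrow> rad V E (Mset V E c1 c2 f m T) \<le> 3 * r"
    using cat_localises_by_separated_cover[OF assms(1,2)] r(1,3) assms(3) by metis
  have "real (rad V E (Mset V E c1 c2 f m T)) \<le> sqrt (32 * real n)" if "mouse_seq V E m" for m
    using of_nat_mono[where 'a = real, OF localised[OF that]] r(4) by simp
  moreover have "real T \<le> sqrt (2 * real n)"
    using \<open>T \<le> r\<close> r(2) by linarith
  ultimately show ?thesis
    using \<open>c1 \<in> V\<close> \<open>c2 \<in> V\<close> \<open>\<forall>bs. f bs \<in> V\<close> \<open>1 \<le> T\<close>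
    by (intro exI[of _ c1] exI[of _ c2] exI[of _ f]) (auto intro!: exI[of _ T])
qed

end
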